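(* Let $n\ge2$. For every $X\in U_Q$ and every $s>0$ such that the horoballs $\mathcal H_s$ and $X\mathcal H_s$ of $\mathbb H^n_{\mathbb C}$ have disjoint interiors, we have $$d'_{\mathbb H^n_{\mathbb C}}(\mathcal H_s,X\mathcal H_s)=\log|c|+\log\frac s2,$$ where $c$ is the bottom-left entry of $X$ in the block decomposition $\mathbb C\times\mathbb C^{n-1}\times\mathbb C$.
   Context: $\mathbb H^n_{\mathbb C}=\{(w_0,w)\in\mathbb C\times\mathbb C^{n-1}:2\mathrm{Re}\,w_0-|w|^2>0\}$ is the Siegel domain with metric $ds^2=\frac{4}{(2\mathrm{Re}\,w_0-|w|^2)^2}\big((dw_0-dw^*w)(\overline{dw_0}-w^*dw)+(2\mathrm{Re}\,w_0-|w|^2)dw^*dw\big)$, $d_{\mathbb H^n_{\mathbb C}}$ its Riemannian distance and $d'_{\mathbb H^n_{\mathbb C}}=\frac12 d_{\mathbb H^n_{\mathbb C}}$; $\mathcal H_s=\{2\mathrm{Re}\,w_0-|w|^2\ge s\}$. Let $q(z_0,z,z_n)=-z_0\bar z_n-z_n\bar z_0+|z|^2$ on $\mathbb C\times\mathbb C^{n-1}\times\mathbb C$, with matrix $Q=\begin{pmatrix}0&0&-1\\0&I&0\\-1&0&0\end{pmatrix}$, and $U_Q$ the group of invertible complex matrices preserving $q$. Via the embedding $(w_0,w)\mapsto[w_0:w:1]$ of $\mathbb H^n_{\mathbb C}$ onto the negative cone of $q$ in $\mathbb P_n(\mathbb C)$, $U_Q$ acts isometrically on $\mathbb H^n_{\mathbb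 C}$ by projective transformations. The distance between two sets is the infimum of distances between their points. *)

theory Defs
  imports "HOL-Analysis.Analysis"
begin

text \<open>Points of the Siegel domain: pairs (w0, w) with w0 complex and w in C^(n-1);
  the dimension n-1 is the cardinality of the finite index type 'm, so n = CARD('m)+1 \<ge> 2.\<close>

definition siegel_h :: "complex \<times> (complex^'m) \<Rightarrow> real" where
  "siegel_h p = 2 * Re (fst p) - (norm (snd p))^2"

definition siegel_domain :: "(complex \<times> (complex^'m::finite)) set" where
  "siegel_domain = {p. siegel_h p > 0}"

definition siegel_metric :: "complex \<times> (complex^'m::finite) \<Rightarrow> complex \<times> (complex^'m) \<Rightarrow> real" where
  "siegel_metric p v =
     4 / (siegel_h p)^2 *
       ((cmod (fst v - (\<Sum>i\<in>UNIV. cnj (snd p $ i) * snd v $ i)))^2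
        + siegel_h p * (norm (snd v))^2)"

definition curve_speed :: "(real \<Rightarrow> complex \<times> (complex^'m::finite)) \<Rightarrow> real \<Rightarrow> real" where
  "curve_speed \<gamma> t = sqrt (siegel_metric (\<gamma> t) (vector_derivative \<gamma> (at t)))"

definition curve_length :: "(real \<Rightarrow> complex \<times> (complex^'m::finite)) \<Rightarrow> real" where
  "curve_length \<gamma> = integral {0..1} (curve_speed \<gamma>)"

definition admissible_curve ::
  "complex \<times> (complex^'m::finite) \<Rightarrow> complex \<times> (complex^'m) \<Rightarrow> (real \<Rightarrow> complex \<times> (complex^'m)) \<Rightarrow> bool" where
  "admissible_curve p q \<gamma> \<longleftrightarrow>
     \<gamma> piecewise_C1_differentiable_on {0..1} \<and> \<gamma> ` {0..1} \<subseteq> siegel_domain \<and>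
     \<gamma> 0 = p \<and> \<gamma> 1 = q \<and> curve_speed \<gamma> integrable_on {0..1}"

definition siegel_dist :: "complex \<times> (complex^'m::finite) \<Rightarrow> complex \<times> (complex^'m) \<Rightarrow> real" where
  "siegel_dist p q = Inf {curve_length \<gamma> | \<gamma>. admissible_curve p q \<gamma>}"

definition siegel_dist' :: "complex \<times> (complex^'m::finite) \<Rightarrow> complex \<times> (complex^'m) \<Rightarrow> real" where
  "siegel_dist' p q = siegel_dist p q / 2"

definition siegel_setdist' :: "(complex \<times> (complex^'m::finite)) set \<Rightarrow> (complex \<times> (complex^'m)) set \<Rightarrow> real" where
  "siegel_setdist' A B = Inf {siegel_dist' p q | p q. p \<in> A \<and> q \<in> B}"

definition horoball :: "real \<Rightarrow> (complex \<times> (complex^'m::finite)) set" where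
  "horoball s = {p. siegel_h p \<ge> s}"

text \<open>Homogeneous coordinates C x C^(n-1) x C, indexed by the type ((unit + 'm) + unit):
  first coordinate z0 = Inl (Inl ()), middle coordinates Inl (Inr i), last coordinate zn = Inr ().\<close>

type_synonym 'm idx = "(unit + 'm) + unit"

abbreviation first_idx :: "'m idx" where "first_idx \<equiv> Inl (Inl ())"
abbreviation mid_idx :: "'m \<Rightarrow> 'm idx" where "mid_idx i \<equiv> Inl (Inr i)"
abbreviation last_idx :: "'m idx" where "last_idx \<equiv> Inr ()"

definition qform :: "complex^('m::finite idx) \<Rightarrow> complex" where
  "qform z = - z $ first_idx * cnj (z $ last_idx) - z $ last_idx * cnj (z $ first_idx)
             + (\<Sum>i\<in>UNIV. complex_of_real ((cmod (z $ mid_idx i))^2))"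

definition U_Q :: "(complex^('m::finite idx)^('m idx)) set" where
  "U_Q = {X. invertible X \<and> (\<forall>z. qform (X *v z) = qform z)}"

definition lift :: "complex \<times> (complex^'m::finite) \<Rightarrow> complex^('m idx)" where
  "lift p = (\<chi> k. case k of Inl (Inl _) \<Rightarrow> fst p | Inl (Inr i) \<Rightarrow> snd p $ i | Inr _ \<Rightarrow> 1)"

definition proj_act :: "complex^('m::finite idx)^('m idx) \<Rightarrow> complex \<times> (complex^'m) \<Rightarrow> complex \<times> (complex^'m)" where
  "proj_act X p = (let z = X *v lift p in
                    ((z $ first_idx) / (z $ last_idx), \<chi> i. (z $ mid_idx i) / (z $ last_idx)))"

end

theory Submission
  imports Defs
begin

text \<open>Write \<open>h\<close> for \<open>siegel_h\<close>, \<open>c\<close> for the bottom-left entry of \<open>X\<close> and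
  \<open>\<ell>(m) = -\<langle>lift m, X e\<^sub>0\<rangle>\<close> for the pairing of \<open>m\<close> with the vector representing the centre
  \<open>X\<infinity>\<close> of \<open>X \<H>\<^sub>s\<close>. Invariance of the hermitian form of \<open>q\<close> gives \<open>h(X p) = h(p) |\<ell>(X p)|\<^sup>2\<close>,
  so \<open>X \<H>\<^sub>s = {m. s |\<ell>(m)|\<^sup>2 \<le> h(m)}\<close>; isotropy of \<open>X e\<^sub>0\<close> gives \<open>|c| h \<le> 2 |\<ell>|\<close>, with
  equality on the vertical line over \<open>X\<infinity>\<close>. Along any curve, both \<open>ln h\<close> and \<open>ln h - ln |\<ell>|\<^sup>2\<close>
  change at most at the speed of the curve. A curve from \<open>\<H>\<^sub>s\<close> to \<open>X \<H>\<^sub>s\<close> meets \<open>|\<ell>| = 1\<close>,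
  where \<open>h \<le> 2/|c|\<close>: before that point \<open>ln h\<close> drops from at least \<open>ln s\<close> to at most
  \<open>ln (2/|c|)\<close>, afterwards \<open>ln h - ln |\<ell>|\<^sup>2\<close> climbs back to at least \<open>ln s\<close>, so the length is at
  least \<open>2 ln (|c| s / 2)\<close>. The vertical geodesic over \<open>X\<infinity>\<close> attains this bound, and \<open>|c| s \<ge> 2\<close>
  since otherwise a point of that line lies in both interiors.\<close>

section \<open>The projective action of \<open>U\<^sub>Q\<close>\<close>

definition herm_form :: "complex^('m::finite idx) \<Rightarrow> complex^('m idx) \<Rightarrow> complex" where
  "herm_form u v = - u $ first_idx * cnj (v $ last_idx) - u $ last_idx * cnj (v $ first_idx)
     + (\<Sum>i\<in>UNIV. u $ mid_idx i * cnj (v $ mid_idx i))"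

lemma qform_eq_herm_form: "qform z = herm_form z z"
  unfolding qform_def herm_form_def complex_norm_square by (simp add: mult.commute)

lemma herm_form_add_left: "herm_form (u + v) w = herm_form u w + herm_form v w"
  and herm_form_add_right: "herm_form u (v + w) = herm_form u v + herm_form u w"
  and herm_form_diff_left: "herm_form (u - v) w = herm_form u w - herm_form v w"
  and herm_form_diff_right: "herm_form u (v - w) = herm_form u v - herm_form u w"
  and herm_form_scale_left: "herm_form (k *s u) v = k * herm_form u v"
  and herm_form_scale_right: "herm_form u (k *s v) = cnj k * herm_form u v"
  unfolding herm_form_def
  by (simp_all add: algebra_simps sum.distrib sum_subtractf sum_distrib_left)

lemma herm_form_polarization:
  "4 * herm_form u v = qform (u + v) - qform (u - v) + \<i> * qform (u + \<i> *s v) - \<i> * qform (u - \<i> *s v)"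
  unfolding qform_eq_herm_form herm_form_add_left herm_form_add_right herm_form_diff_left
    herm_form_diff_right herm_form_scale_left herm_form_scale_right
  by (simp add: algebra_simps)

lemma U_Q_qform: "X \<in> U_Q \<Longrightarrow> qform (X *v z) = qform z"
  unfolding U_Q_def by auto

lemma U_Q_herm_form:
  assumes "X \<in> U_Q"
  shows "herm_form (X *v u) (X *v v) = herm_form u v"
proof -
  have "4 * herm_form (X *v u) (X *v v) = 4 * herm_form u v"
    unfolding herm_form_polarization
    by (simp add: matrix_vector_right_distrib[symmetric] matrix_vector_mult_diff_distrib[symmetric]
        vector_scalar_commute[symmetric] U_Q_qform[OF assms])
  then show ?thesis by simp
qed

lemma U_Q_inverse:
  assumes "X \<in> U_Q"
  obtains Y where "\<And>z. X *v (Y *v z) = z" and "\<And>z. qform (Y *v z) = qform z"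
proof -
  obtain Y where "X ** Y = mat 1" using assms unfolding U_Q_def invertible_def by blast
  then have XY: "X *v (Y *v z) = z" for z by (simp add: matrix_vector_mul_assoc)
  then have "qform (Y *v z) = qform z" for z by (metis U_Q_qform[OF assms])
  with XY show ?thesis by (rule that)
qed

lemma matrix_vector_mult_axis: "(X *v axis k 1) $ j = X $ j $ k"
  unfolding matrix_vector_mult_def axis_def by (simp add: if_distrib cong: if_cong)

lemma norm_vec_power2: "(norm (x::complex^'m::finite))^2 = (\<Sum>i\<in>UNIV. (cmod (x $ i))^2)"
  unfolding norm_vec_def L2_set_def by (simp add: sum_nonneg)

lemma qform_lift: "qform (lift p) = - complex_of_real (siegel_h p)"
proof -
  have "qform (lift p) = - fst p - cnj (fst p) + (\<Sum>i\<in>UNIV. complex_of_real ((cmod (snd p $ i))^2))"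
    unfolding qform_def lift_def by simp
  also have "\<dots> = - complex_of_real (siegel_h p)"
    unfolding siegel_h_def norm_vec_power2 by (simp add: complex_eq_iff)
  finally show ?thesis .
qed

lemma qform_scale: "qform (k *s z) = complex_of_real ((cmod k)^2) * qform z"
  unfolding qform_eq_herm_form herm_form_scale_left herm_form_scale_right complex_norm_square
  by (simp add: algebra_simps)

text \<open>Vectors with vanishing last coordinate are not negative, so a q-preserving map
  sends the negative cone into the affine chart of the Siegel domain.\<close>

lemma last_lift_image_nonzero:
  assumes "\<And>z. qform (M *v z) = qform z" and "0 < siegel_h p"
  shows "(M *v lift p) $ last_idx \<noteq> 0"
proof
  assume "(M *v lift p) $ last_idx = 0"
  then have "0 \<le> Re (qform (M *v lift p))" unfolding qform_def by (simp add: sum_nonneg)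
  with assms show False by (simp add: qform_lift)
qed

lemma lift_proj_act:
  assumes "(M *v lift p) $ last_idx \<noteq> 0"
  shows "lift (proj_act M p) = (1 / (M *v lift p) $ last_idx) *s (M *v lift p)"
  using assms unfolding lift_def proj_act_def Let_def
  by (auto simp: vec_eq_iff split: sum.splits)

lemma proj_act_eqI:
  assumes "M *v lift p = k *s lift m" and "k \<noteq> 0"
  shows "proj_act M p = m"
proof -
  have "(M *v lift p) $ last_idx = k" using assms(1) by (simp add: vec_eq_iff lift_def)
  with assms show ?thesis unfolding proj_act_def Let_def
    by (auto simp: lift_def vec_eq_iff prod_eq_iff)
qed

lemma siegel_h_proj_act_scale:
  assumes "\<And>z. qform (M *v z) = qform z" and "0 < siegel_h p"
  shows "siegel_h (proj_act M p) = siegel_h p / (cmod ((M *v lift p) $ last_idx))^2"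
proof -
  have "siegel_h (proj_act M p) = - Re (qform (lift (proj_act M p)))" by (simp add: qform_lift)
  also have "\<dots> = (cmod (1 / (M *v lift p) $ last_idx))^2 * siegel_h p"
    unfolding lift_proj_act[OF last_lift_image_nonzero[OF assms]] qform_scale
    by (simp add: assms(1) qform_lift)
  finally show ?thesis by (simp add: norm_divide power_divide)
qed

definition center_pairing :: "complex^('m::finite idx)^('m idx) \<Rightarrow> complex \<times> (complex^'m) \<Rightarrow> complex" where
  "center_pairing X m = - herm_form (lift m) (X *v axis first_idx 1)"

lemma center_pairing_eq:
  "center_pairing X m = fst m * cnj (X $ last_idx $ first_idx) + cnj (X $ first_idx $ first_idx)
     - (\<Sum>i\<in>UNIV. snd m $ i * cnj (X $ mid_idx i $ first_idx))"
  unfolding center_pairing_def herm_form_def lift_def matrix_vector_mult_axis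
  by (simp add: algebra_simps)

lemma siegel_h_proj_act:
  assumes X: "X \<in> U_Q" and p: "0 < siegel_h p"
  shows "siegel_h (proj_act X p) = siegel_h p * (cmod (center_pairing X (proj_act X p)))^2"
    and "center_pairing X (proj_act X p) \<noteq> 0"
proof -
  define z where "z = X *v lift p"
  have zn: "z $ last_idx \<noteq> 0"
    unfolding z_def using last_lift_image_nonzero U_Q_qform[OF X] p by blast
  have "herm_form z (X *v axis first_idx 1) = herm_form (lift p) (axis first_idx 1)"
    unfolding z_def by (rule U_Q_herm_form[OF X])
  also have "\<dots> = -1" by (simp add: herm_form_def lift_def axis_def)
  finally have "center_pairing X (proj_act X p) = 1 / z $ last_idx"
    unfolding center_pairing_def lift_proj_act[OF zn[unfolded z_def]] z_def[symmetric]
      herm_form_scale_left by simp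
  moreover have "siegel_h (proj_act X p) = siegel_h p / (cmod (z $ last_idx))^2"
    unfolding z_def using siegel_h_proj_act_scale U_Q_qform[OF X] p by blast
  ultimately show "siegel_h (proj_act X p) = siegel_h p * (cmod (center_pairing X (proj_act X p)))^2"
    and "center_pairing X (proj_act X p) \<noteq> 0"
    using zn by (simp_all add: norm_divide power_divide)
qed

lemma proj_act_surj_siegel_domain:
  assumes X: "X \<in> U_Q" and m: "0 < siegel_h m"
  obtains p where "proj_act X p = m" and "0 < siegel_h p"
proof -
  obtain Y where XY: "\<And>z. X *v (Y *v z) = z" and qY: "\<And>z. qform (Y *v z) = qform z"
    using U_Q_inverse[OF X] by blast
  define z where "z = Y *v lift m"
  have zn: "z $ last_idx \<noteq> 0" unfolding z_def using last_lift_image_nonzero qY m by blast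
  have "X *v lift (proj_act Y m) = (1 / z $ last_idx) *s lift m"
    unfolding lift_proj_act[OF zn[unfolded z_def]] vector_scalar_commute XY z_def ..
  then have "proj_act X (proj_act Y m) = m" by (rule proj_act_eqI) (simp add: zn)
  moreover have "0 < siegel_h (proj_act Y m)"
    unfolding siegel_h_proj_act_scale[OF qY m] using m zn[unfolded z_def] by simp
  ultimately show ?thesis by (rule that)
qed

lemma proj_act_horoball:
  fixes X :: "complex^('m::finite idx)^('m idx)"
  assumes X: "X \<in> U_Q" and s: "0 < s"
  shows "proj_act X ` horoball s
    = {m. 0 < siegel_h m \<and> s * (cmod (center_pairing X m))^2 \<le> siegel_h m}"
proof (intro equalityI subsetI)
  fix m assume "m \<in> proj_act X ` horoball s"
  then obtain p where pm: "m = proj_act X p" and hp: "s \<le> siegel_h p"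
    unfolding horoball_def by blast
  with s have p: "0 < siegel_h p" by simp
  note h = siegel_h_proj_act[OF X p, folded pm]
  show "m \<in> {m. 0 < siegel_h m \<and> s * (cmod (center_pairing X m))^2 \<le> siegel_h m}"
    using h hp p by (simp add: mult_right_mono)
next
  fix m assume "m \<in> {m. 0 < siegel_h m \<and> s * (cmod (center_pairing X m))^2 \<le> siegel_h m}"
  then have m: "0 < siegel_h m" and hm: "s * (cmod (center_pairing X m))^2 \<le> siegel_h m"
    by auto
  obtain p where pm: "proj_act X p = m" and p: "0 < siegel_h p"
    using proj_act_surj_siegel_domain[OF X m] by blast
  note h = siegel_h_proj_act[OF X p, unfolded pm]
  have "s \<le> siegel_h p" using hm h by simp
  then show "m \<in> proj_act X ` horoball s" using pm unfolding horoball_def by blast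
qed

section \<open>Pairing with the centre of the image horoball\<close>

lemma U_Q_first_column_isotropic:
  fixes X :: "complex^('m::finite idx)^('m idx)"
  assumes "X \<in> U_Q"
  shows "2 * Re (X $ first_idx $ first_idx * cnj (X $ last_idx $ first_idx))
    = (\<Sum>i\<in>UNIV. (cmod (X $ mid_idx i $ first_idx))^2)"
proof -
  have "qform (X *v axis first_idx 1) = qform (axis first_idx 1 :: complex^('m idx))"
    by (rule U_Q_qform[OF assms])
  also have "\<dots> = 0" by (simp add: qform_def axis_def)
  finally have "Re (qform (X *v axis first_idx 1)) = 0" by simp
  then show ?thesis unfolding qform_def matrix_vector_mult_axis by (simp add: algebra_simps)
qed

lemma cmod_mult_cmod: "cmod z * cmod z = Re z * Re z + Im z * Im z"
  using cmod_power2[of z] by (simp add: power2_eq_square)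

lemma cmod_diff_power2: "(cmod (a - b))^2 = (cmod a)^2 + (cmod b)^2 - 2 * Re (a * cnj b)"
  unfolding cmod_power2 by (simp add: algebra_simps power2_eq_square)

lemma Re_center_pairing:
  assumes X: "X \<in> U_Q"
  defines "c \<equiv> X $ last_idx $ first_idx"
  shows "2 * Re (c * center_pairing X m) = siegel_h m * (cmod c)^2
           + (\<Sum>i\<in>UNIV. (cmod (c * snd m $ i - X $ mid_idx i $ first_idx))^2)"
proof -
  let ?a = "X $ first_idx $ first_idx"
  have "Re (c * cnj ?a) = Re (?a * cnj c)" by (simp add: algebra_simps)
  then have "2 * Re (c * center_pairing X m) = 2 * (cmod c)^2 * Re (fst m) + 2 * Re (?a * cnj c)
        - 2 * (\<Sum>i\<in>UNIV. Re (c * snd m $ i * cnj (X $ mid_idx i $ first_idx)))"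
    unfolding center_pairing_eq c_def[symmetric]
    by (simp add: algebra_simps sum_distrib_left power2_eq_square cmod_mult_cmod)
  also have "\<dots> = siegel_h m * (cmod c)^2
           + (\<Sum>i\<in>UNIV. (cmod (c * snd m $ i - X $ mid_idx i $ first_idx))^2)"
    unfolding cmod_diff_power2 siegel_h_def norm_vec_power2
      U_Q_first_column_isotropic[OF X, folded c_def]
    by (simp add: sum.distrib sum_subtractf sum_distrib_left sum_distrib_right algebra_simps
        norm_mult power_mult_distrib)
  finally show ?thesis .
qed

lemma siegel_h_le_center_pairing:
  assumes X: "X \<in> U_Q" and h: "0 \<le> siegel_h m"
  shows "cmod (X $ last_idx $ first_idx) * siegel_h m \<le> 2 * cmod (center_pairing X m)"
proof -
  define c where "c = X $ last_idx $ first_idx"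
  have "cmod c * (cmod c * siegel_h m) \<le> 2 * Re (c * center_pairing X m)"
    unfolding Re_center_pairing[OF X, folded c_def]
    by (simp add: sum_nonneg power2_eq_square algebra_simps)
  also have "\<dots> \<le> cmod c * (2 * cmod (center_pairing X m))"
    using complex_Re_le_cmod[of "c * center_pairing X m"] by (simp add: norm_mult)
  finally show ?thesis
    unfolding c_def[symmetric] using h by (cases "c = 0") simp_all
qed

lemma center_pairing_nonzero:
  assumes "X \<in> U_Q" and "X $ last_idx $ first_idx \<noteq> 0" and "0 < siegel_h m"
  shows "center_pairing X m \<noteq> 0"
  using siegel_h_le_center_pairing[OF assms(1), of m] assms(2,3) by (auto simp: mult_le_0_iff)

text \<open>The vertical line over the centre \<open>X\<infinity>\<close> of the image horoball.\<close>

lemma vertical_line_center: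
  fixes X :: "complex^('m::finite idx)^('m idx)"
  assumes X: "X \<in> U_Q" and c: "X $ last_idx $ first_idx \<noteq> 0"
  defines "z \<equiv> X $ first_idx $ first_idx / X $ last_idx $ first_idx"
    and "\<zeta> \<equiv> \<chi> i. X $ mid_idx i $ first_idx / X $ last_idx $ first_idx"
  shows "siegel_h (z + of_real t, \<zeta>) = 2 * t"
    and "center_pairing X (z + of_real t, \<zeta>) = of_real t * cnj (X $ last_idx $ first_idx)"
proof -
  define C where "C = X $ last_idx $ first_idx"
  define C0 where "C0 = X $ first_idx $ first_idx"
  define Ci where "Ci i = X $ mid_idx i $ first_idx" for i
  have iso: "2 * Re (C0 * cnj C) = (\<Sum>i\<in>UNIV. (cmod (Ci i))^2)"
    using U_Q_first_column_isotropic[OF X] unfolding C_def C0_def Ci_def .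
  have norm_\<zeta>: "(norm \<zeta>)^2 = (\<Sum>i\<in>UNIV. (cmod (Ci i))^2) / (cmod C)^2"
    unfolding norm_vec_power2 \<zeta>_def C_def Ci_def
    by (simp add: norm_divide power_divide sum_divide_distrib)
  have Re_z: "Re z = Re (C0 * cnj C) / (cmod C)^2"
    unfolding z_def C0_def[symmetric] C_def[symmetric] Re_divide' by simp
  have "2 * Re z = (norm \<zeta>)^2"
    unfolding Re_z norm_\<zeta> iso[symmetric] by simp
  then show "siegel_h (z + of_real t, \<zeta>) = 2 * t"
    unfolding siegel_h_def by simp
  have "(\<Sum>i\<in>UNIV. Ci i * cnj (Ci i)) = complex_of_real (\<Sum>i\<in>UNIV. (cmod (Ci i))^2)"
    unfolding of_real_sum complex_norm_square ..
  also have "\<dots> = C0 * cnj C + C * cnj C0" unfolding iso[symmetric] by (simp add: complex_eq_iff)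
  finally have sum_eq: "(\<Sum>i\<in>UNIV. Ci i * cnj (Ci i)) = C0 * cnj C + C * cnj C0" .
  have "center_pairing X (z + of_real t, \<zeta>)
      = (C0 / C + of_real t) * cnj C + cnj C0 - (\<Sum>i\<in>UNIV. Ci i * cnj (Ci i)) / C"
    unfolding center_pairing_eq z_def \<zeta>_def C_def C0_def Ci_def sum_divide_distrib
    by (simp add: field_simps)
  also have "\<dots> = of_real t * cnj C"
    unfolding sum_eq using c C_def by (simp add: field_simps)
  finally show "center_pairing X (z + of_real t, \<zeta>) = of_real t * cnj (X $ last_idx $ first_idx)"
    unfolding C_def .
qed

section \<open>Pointwise bounds by the metric\<close>

definition dsiegel_h :: "complex \<times> (complex^'m::finite) \<Rightarrow> complex \<times> (complex^'m) \<Rightarrow> real" where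
  "dsiegel_h p V = 2 * Re (fst V - (\<Sum>i\<in>UNIV. cnj (snd p $ i) * snd V $ i))"

definition dcenter_pairing :: "complex^('m::finite idx)^('m idx) \<Rightarrow> complex \<times> (complex^'m) \<Rightarrow> complex" where
  "dcenter_pairing X V = fst V * cnj (X $ last_idx $ first_idx)
     - (\<Sum>i\<in>UNIV. snd V $ i * cnj (X $ mid_idx i $ first_idx))"

lemma siegel_metric_nonneg: "0 < siegel_h p \<Longrightarrow> 0 \<le> siegel_metric p V"
  unfolding siegel_metric_def by simp

lemma sqrt_siegel_metric:
  assumes "0 < siegel_h p"
  shows "sqrt (siegel_metric p V) = 2 / siegel_h p *
     sqrt ((cmod (fst V - (\<Sum>i\<in>UNIV. cnj (snd p $ i) * snd V $ i)))^2 + siegel_h p * (norm (snd V))^2)"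
proof -
  have "siegel_metric p V = (2 / siegel_h p)^2 *
     ((cmod (fst V - (\<Sum>i\<in>UNIV. cnj (snd p $ i) * snd V $ i)))^2 + siegel_h p * (norm (snd V))^2)"
    unfolding siegel_metric_def by (simp add: power_divide)
  then show ?thesis using assms by (simp add: real_sqrt_mult)
qed

lemma abs_dsiegel_h_le_sqrt_siegel_metric:
  assumes "0 < siegel_h p"
  shows "\<bar>dsiegel_h p V / siegel_h p\<bar> \<le> sqrt (siegel_metric p V)"
proof -
  let ?\<alpha> = "fst V - (\<Sum>i\<in>UNIV. cnj (snd p $ i) * snd V $ i)"
  have "cmod ?\<alpha> \<le> sqrt ((cmod ?\<alpha>)^2 + siegel_h p * (norm (snd V))^2)"
    by (rule real_le_rsqrt) (use assms in simp)
  then have "\<bar>Re ?\<alpha>\<bar> \<le> sqrt ((cmod ?\<alpha>)^2 + siegel_h p * (norm (snd V))^2)"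
    using abs_Re_le_cmod[of ?\<alpha>] by linarith
  then show ?thesis
    unfolding sqrt_siegel_metric[OF assms] dsiegel_h_def using assms
    by (simp add: abs_div divide_right_mono)
qed

lemma mult_add_mult_le_sqrt:
  fixes A a B b :: real
  shows "A * a + B * b \<le> sqrt (A^2 + B^2) * sqrt (a^2 + b^2)"
proof -
  have "(A * a + B * b)^2 \<le> (A^2 + B^2) * (a^2 + b^2)"
    using sum_squares_ge_zero[of "A * b - B * a" 0] by (simp add: power2_eq_square algebra_simps)
  then show ?thesis by (simp add: real_le_rsqrt real_sqrt_mult[symmetric])
qed

text \<open>The hypothesis, which has the shape of \<open>Re_center_pairing\<close>, makes
  \<open>|l - h c\<^sup>*|\<^sup>2 + h \<Sum>|g\<^sub>i|\<^sup>2 = |l|\<^sup>2\<close>, so Cauchy-Schwarz yields the factor \<open>|l|\<close>.\<close>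

lemma cmod_diff_sum_le_cauchy_schwarz:
  fixes l c \<alpha> :: complex and g v :: "'i \<Rightarrow> complex" and h :: real
  assumes h: "0 < h" and key: "2 * Re (c * l) = h * (cmod c)^2 + (\<Sum>i\<in>I. (cmod (g i))^2)"
  shows "cmod ((l - h * cnj c) * \<alpha> - h * (\<Sum>i\<in>I. g i * v i))
    \<le> cmod l * sqrt ((cmod \<alpha>)^2 + h * (\<Sum>i\<in>I. (cmod (v i))^2))"
proof -
  define G where "G = (\<Sum>i\<in>I. (cmod (g i))^2)"
  define M where "M = (\<Sum>i\<in>I. (cmod (v i))^2)"
  have G: "0 \<le> G" and M: "0 \<le> M" unfolding G_def M_def by (simp_all add: sum_nonneg)
  have CS: "(\<Sum>i\<in>I. cmod (g i) * cmod (v i)) \<le> sqrt G * sqrt M"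
    using L2_set_mult_ineq[of "\<lambda>i. cmod (g i)" "\<lambda>i. cmod (v i)" I]
    unfolding G_def M_def L2_set_def by simp
  have "cmod ((l - h * cnj c) * \<alpha> - h * (\<Sum>i\<in>I. g i * v i))
      \<le> cmod ((l - h * cnj c) * \<alpha>) + cmod (h * (\<Sum>i\<in>I. g i * v i))"
    by (rule norm_triangle_ineq4)
  also have "\<dots> \<le> cmod (l - h * cnj c) * cmod \<alpha> + h * (\<Sum>i\<in>I. cmod (g i) * cmod (v i))"
    using norm_sum[of "\<lambda>i. g i * v i" I] h by (simp add: norm_mult mult_left_mono)
  also have "\<dots> \<le> cmod (l - h * cnj c) * cmod \<alpha> + h * (sqrt G * sqrt M)"
    using CS h by simp
  also have "\<dots> = cmod (l - h * cnj c) * cmod \<alpha> + sqrt (h * G) * sqrt (h * M)"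
    using h by (simp add: real_sqrt_mult)
  also have "\<dots> \<le> sqrt ((cmod (l - h * cnj c))^2 + (sqrt (h * G))^2) * sqrt ((cmod \<alpha>)^2 + (sqrt (h * M))^2)"
    by (rule mult_add_mult_le_sqrt)
  also have "(cmod (l - h * cnj c))^2 + (sqrt (h * G))^2 = (cmod l)^2"
  proof -
    have G_eq: "G = 2 * Re (c * l) - h * (cmod c)^2" using key unfolding G_def by linarith
    have "h * G = 2 * h * Re (c * l) - h^2 * (cmod c)^2"
      unfolding G_eq by (simp add: power2_eq_square algebra_simps)
    moreover have "(cmod (l - h * cnj c))^2 = (cmod l)^2 + h^2 * (cmod c)^2 - 2 * h * Re (c * l)"
      unfolding cmod_diff_power2 by (simp add: norm_mult power_mult_distrib algebra_simps)
    moreover have "(sqrt (h * G))^2 = h * G" using h G by simp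
    ultimately show ?thesis by linarith
  qed
  finally show ?thesis using h M unfolding M_def by simp
qed

lemma abs_dlog_ratio_le_sqrt_siegel_metric:
  fixes X :: "complex^('m::finite idx)^('m idx)" and p V :: "complex \<times> (complex^'m)"
  assumes X: "X \<in> U_Q" and hp: "0 < siegel_h p" and l0: "center_pairing X p \<noteq> 0"
  shows "\<bar>dsiegel_h p V / siegel_h p
      - 2 * Re (cnj (center_pairing X p) * dcenter_pairing X V) / (cmod (center_pairing X p))^2\<bar>
    \<le> sqrt (siegel_metric p V)"
proof -
  define h where "h = siegel_h p"
  define l where "l = center_pairing X p"
  define c where "c = X $ last_idx $ first_idx"
  define \<alpha> where "\<alpha> = fst V - (\<Sum>i\<in>UNIV. cnj (snd p $ i) * snd V $ i)"
  define g where "g i = cnj (c * snd p $ i - X $ mid_idx i $ first_idx)" for i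
  define Q where "Q = (cmod \<alpha>)^2 + h * (norm (snd V))^2"
  define E where "E = \<alpha> - h * dcenter_pairing X V / l"
  have h: "0 < h" using hp h_def by simp
  have "dcenter_pairing X V = cnj c * \<alpha> + (\<Sum>i\<in>UNIV. g i * snd V $ i)"
    unfolding dcenter_pairing_def \<alpha>_def g_def c_def
    by (simp add: algebra_simps sum_distrib_left sum_subtractf)
  then have lE: "l * E = (l - h * cnj c) * \<alpha> - h * (\<Sum>i\<in>UNIV. g i * snd V $ i)"
    unfolding E_def using l0 l_def by (simp add: field_simps)
  have key: "2 * Re (c * l) = h * (cmod c)^2 + (\<Sum>i\<in>UNIV. (cmod (g i))^2)"
    using Re_center_pairing[OF X, of p] unfolding g_def complex_mod_cnj h_def l_def c_def .
  have "cmod (l * E) \<le> cmod l * sqrt Q"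
    unfolding lE Q_def norm_vec_power2 by (rule cmod_diff_sum_le_cauchy_schwarz[OF h key])
  then have "\<bar>Re E\<bar> \<le> sqrt Q"
    using l0 l_def abs_Re_le_cmod[of E] by (simp add: norm_mult)
  moreover have "dsiegel_h p V / h - 2 * Re (cnj l * dcenter_pairing X V) / (cmod l)^2 = 2 / h * Re E"
  proof -
    define r where "r = Re (cnj l * dcenter_pairing X V) / (cmod l)^2"
    have "Re (dcenter_pairing X V / l) = r"
      unfolding r_def Re_divide' by (simp add: algebra_simps)
    then have ReE: "Re E = Re \<alpha> - h * r"
      unfolding E_def by (simp add: times_divide_eq_right[symmetric] del: times_divide_eq_right)
    have "dsiegel_h p V / h - 2 * Re (cnj l * dcenter_pairing X V) / (cmod l)^2 = 2 * Re \<alpha> / h - 2 * r"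
      unfolding dsiegel_h_def \<alpha>_def r_def by simp
    also have "\<dots> = 2 / h * Re E" unfolding ReE using h by (simp add: field_simps)
    finally show ?thesis .
  qed
  ultimately show ?thesis
    unfolding sqrt_siegel_metric[OF hp] h_def[symmetric] l_def[symmetric] \<alpha>_def[symmetric] Q_def[symmetric]
    using h by (simp add: abs_mult divide_right_mono)
qed

section \<open>Length bounds along curves\<close>

lemma has_vector_derivative_fst_snd:
  assumes "(\<gamma> has_vector_derivative V) F"
  shows "((\<lambda>t. fst (\<gamma> t)) has_vector_derivative fst V) F"
    and "((\<lambda>t. snd (\<gamma> t) $ i) has_vector_derivative snd V $ i) F"
  using bounded_linear.has_vector_derivative[OF bounded_linear_fst assms]
    bounded_linear.has_vector_derivative[OF bounded_linear_vec_nth,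
      OF bounded_linear.has_vector_derivative[OF bounded_linear_snd assms]]
  by auto

lemma has_real_derivative_siegel_h:
  fixes \<gamma> :: "real \<Rightarrow> complex \<times> (complex^'m::finite)"
  assumes "(\<gamma> has_vector_derivative V) (at t)"
  shows "((\<lambda>t. siegel_h (\<gamma> t)) has_real_derivative dsiegel_h (\<gamma> t) V) (at t)"
proof -
  have h: "siegel_h p = Re (2 * fst p - (\<Sum>i\<in>UNIV. snd p $ i * cnj (snd p $ i)))"
    for p :: "complex \<times> (complex^'m)"
    unfolding siegel_h_def norm_vec_power2 by (simp add: Re_sum cmod_mult_cmod power2_eq_square)
  have "((\<lambda>t. 2 * fst (\<gamma> t) - (\<Sum>i\<in>UNIV. snd (\<gamma> t) $ i * cnj (snd (\<gamma> t) $ i))) has_vector_derivative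
     (2 * fst V - (\<Sum>i\<in>UNIV. snd (\<gamma> t) $ i * cnj (snd V $ i) + snd V $ i * cnj (snd (\<gamma> t) $ i)))) (at t)"
    by (intro has_vector_derivative_diff has_vector_derivative_sum has_vector_derivative_mult
        has_vector_derivative_cnj has_vector_derivative_fst_snd assms has_vector_derivative_mult_right)
  from bounded_linear.has_vector_derivative[OF bounded_linear_Re this]
  show ?thesis
    unfolding h has_real_derivative_iff_has_vector_derivative dsiegel_h_def
    by (simp add: Re_sum sum_distrib_left algebra_simps)
qed

lemma has_vector_derivative_center_pairing:
  assumes "(\<gamma> has_vector_derivative V) (at t)"
  shows "((\<lambda>t. center_pairing X (\<gamma> t)) has_vector_derivative dcenter_pairing X V) (at t)"
  unfolding center_pairing_eq dcenter_pairing_def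
  by (rule derivative_eq_intros has_vector_derivative_fst_snd assms has_vector_derivative_sum
        has_vector_derivative_mult_left | simp)+

lemma has_real_derivative_norm_center_pairing:
  assumes "(\<gamma> has_vector_derivative V) (at t)"
  shows "((\<lambda>t. (cmod (center_pairing X (\<gamma> t)))^2) has_real_derivative
     2 * Re (cnj (center_pairing X (\<gamma> t)) * dcenter_pairing X V)) (at t)"
proof -
  let ?l = "\<lambda>t. center_pairing X (\<gamma> t)"
  have "((\<lambda>t. ?l t * cnj (?l t)) has_vector_derivative
      (?l t * cnj (dcenter_pairing X V) + dcenter_pairing X V * cnj (?l t))) (at t)"
    by (intro has_vector_derivative_mult has_vector_derivative_cnj
        has_vector_derivative_center_pairing assms)
  from bounded_linear.has_vector_derivative[OF bounded_linear_Re this]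
  show ?thesis
    unfolding has_real_derivative_iff_has_vector_derivative
    by (simp add: cmod_mult_cmod power2_eq_square algebra_simps)
qed

lemma admissible_curve_continuous:
  "admissible_curve p q \<gamma> \<Longrightarrow> continuous_on {0..1} \<gamma>"
  unfolding admissible_curve_def piecewise_C1_differentiable_on_def by auto

lemma admissible_curve_differentiable:
  assumes "admissible_curve p q \<gamma>"
  obtains S where "finite S"
    and "\<And>t. t \<in> {0..1} - S \<Longrightarrow> (\<gamma> has_vector_derivative vector_derivative \<gamma> (at t)) (at t)"
proof -
  from assms obtain S D where "finite S" "\<forall>t\<in>{0..1} - S. (\<gamma> has_vector_derivative D t) (at t)"
    unfolding admissible_curve_def piecewise_C1_differentiable_on_def C1_differentiable_on_def
    by blast
  then show ?thesis using that vector_derivative_at by metis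
qed

lemma admissible_curve_siegel_h_pos:
  "admissible_curve p q \<gamma> \<Longrightarrow> t \<in> {0..1} \<Longrightarrow> 0 < siegel_h (\<gamma> t)"
  unfolding admissible_curve_def siegel_domain_def by (auto simp: image_subset_iff)

lemma curve_speed_nonneg:
  "admissible_curve p q \<gamma> \<Longrightarrow> t \<in> {0..1} \<Longrightarrow> 0 \<le> curve_speed \<gamma> t"
  unfolding curve_speed_def
  by (simp add: siegel_metric_nonneg admissible_curve_siegel_h_pos)

lemma variation_le_integral_curve_speed:
  assumes adm: "admissible_curve p q \<gamma>" and uv: "0 \<le> u" "u \<le> v" "v \<le> 1"
    and G: "continuous_on {0..1} G"
    and G': "\<And>t V. t \<in> {0<..<1} \<Longrightarrow> (\<gamma> has_vector_derivative V) (at t) \<Longrightarrow>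
             \<exists>D. (G has_real_derivative D) (at t) \<and> \<bar>D\<bar> \<le> sqrt (siegel_metric (\<gamma> t) V)"
  shows "\<bar>G v - G u\<bar> \<le> integral {u..v} (curve_speed \<gamma>)"
proof -
  obtain S where S: "finite S"
    and \<gamma>': "\<And>t. t \<in> {0..1} - S \<Longrightarrow> (\<gamma> has_vector_derivative vector_derivative \<gamma> (at t)) (at t)"
    using admissible_curve_differentiable[OF adm] by blast
  define DG where "DG t = (SOME D. (G has_real_derivative D) (at t) \<and> \<bar>D\<bar> \<le> curve_speed \<gamma> t)" for t
  have DG: "(G has_real_derivative DG t) (at t) \<and> \<bar>DG t\<bar> \<le> curve_speed \<gamma> t"
    if "t \<in> {u<..<v} - S" for t
  proof -
    have "\<exists>D. (G has_real_derivative D) (at t) \<and> \<bar>D\<bar> \<le> curve_speed \<gamma> t"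
      unfolding curve_speed_def using that uv by (intro G' \<gamma>') auto
    then show ?thesis unfolding DG_def by (rule someI_ex)
  qed
  define DG0 where "DG0 t = (if t \<in> {u<..<v} - S then DG t else 0)" for t
  have "(DG has_integral (G v - G u)) {u..v}"
  proof (rule fundamental_theorem_of_calculus_interior_strong[OF S uv(2)])
    show "(G has_vector_derivative DG t) (at t)" if "t \<in> {u<..<v} - S" for t
      using DG[OF that] by (simp add: has_real_derivative_iff_has_vector_derivative)
    show "continuous_on {u..v} G" using G by (rule continuous_on_subset) (use uv in auto)
  qed
  then have FTC: "(DG0 has_integral (G v - G u)) {u..v}"
    by (rule has_integral_spike_finite[of "S \<union> {u, v}", rotated 2]) (use S in \<open>auto simp: DG0_def\<close>)
  have "norm (integral {u..v} DG0) \<le> integral {u..v} (curve_speed \<gamma>)"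
  proof (rule integral_norm_bound_integral)
    show "DG0 integrable_on {u..v}" using FTC by blast
    show "curve_speed \<gamma> integrable_on {u..v}"
      using adm uv unfolding admissible_curve_def by (auto intro: integrable_subinterval_real)
    show "norm (DG0 t) \<le> curve_speed \<gamma> t" if "t \<in> {u..v}" for t
      using DG curve_speed_nonneg[OF adm, of t] that uv unfolding DG0_def by auto
  qed
  then show ?thesis using FTC by (simp add: integral_unique)
qed

lemma continuous_on_siegel_h: "continuous_on A (siegel_h :: complex \<times> (complex^'m::finite) \<Rightarrow> real)"
  unfolding siegel_h_def[abs_def] by (intro continuous_intros)

lemma continuous_on_center_pairing: "continuous_on A (center_pairing X)"
  unfolding center_pairing_eq[abs_def]
  by (intro continuous_intros continuous_on_compose2[OF bounded_linear.continuous_on[OF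
        bounded_linear_vec_nth continuous_on_id]]) auto

lemma ln_siegel_h_variation_le:
  assumes adm: "admissible_curve p q \<gamma>" and uv: "0 \<le> u" "u \<le> v" "v \<le> 1"
  shows "\<bar>ln (siegel_h (\<gamma> v)) - ln (siegel_h (\<gamma> u))\<bar> \<le> integral {u..v} (curve_speed \<gamma>)"
proof (rule variation_le_integral_curve_speed[OF adm uv])
  show "continuous_on {0..1} (\<lambda>t. ln (siegel_h (\<gamma> t)))"
    using admissible_curve_continuous[OF adm] admissible_curve_siegel_h_pos[OF adm]
    by (intro continuous_intros continuous_on_compose2[OF continuous_on_siegel_h]) (auto, fastforce)
  fix t V assume t: "t \<in> {0<..<1}" and V: "(\<gamma> has_vector_derivative V) (at t)"
  have h: "0 < siegel_h (\<gamma> t)" using admissible_curve_siegel_h_pos[OF adm] t by auto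
  show "\<exists>D. ((\<lambda>t. ln (siegel_h (\<gamma> t))) has_real_derivative D) (at t) \<and> \<bar>D\<bar> \<le> sqrt (siegel_metric (\<gamma> t) V)"
    using DERIV_chain2[OF DERIV_ln_divide[OF h] has_real_derivative_siegel_h[OF V]]
      abs_dsiegel_h_le_sqrt_siegel_metric[OF h, of V]
    by auto
qed

text \<open>\<open>ln h - ln |\<ell>|\<^sup>2\<close> is \<open>ln h\<close> composed with the inverse of \<open>X\<close>, hence it is again
  1-Lipschitz for the metric.\<close>

lemma ln_ratio_variation_le:
  fixes X :: "complex^('m::finite idx)^('m idx)"
  assumes X: "X \<in> U_Q" and c: "X $ last_idx $ first_idx \<noteq> 0"
    and adm: "admissible_curve p q \<gamma>" and uv: "0 \<le> u" "u \<le> v" "v \<le> 1"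
  defines "R \<equiv> \<lambda>t. ln (siegel_h (\<gamma> t)) - ln ((cmod (center_pairing X (\<gamma> t)))^2)"
  shows "\<bar>R v - R u\<bar> \<le> integral {u..v} (curve_speed \<gamma>)"
  unfolding R_def
proof (rule variation_le_integral_curve_speed[OF adm uv])
  have l: "0 < (cmod (center_pairing X (\<gamma> t)))^2" if "t \<in> {0..1}" for t
    using center_pairing_nonzero[OF X c admissible_curve_siegel_h_pos[OF adm that]] by simp
  show "continuous_on {0..1} (\<lambda>t. ln (siegel_h (\<gamma> t)) - ln ((cmod (center_pairing X (\<gamma> t)))^2))"
    using admissible_curve_continuous[OF adm] admissible_curve_siegel_h_pos[OF adm] l
    by (intro continuous_intros continuous_on_compose2[OF continuous_on_siegel_h]
        continuous_on_compose2[OF continuous_on_center_pairing]) (auto, fastforce+)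
  fix t V assume t: "t \<in> {0<..<1}" and V: "(\<gamma> has_vector_derivative V) (at t)"
  have h: "0 < siegel_h (\<gamma> t)" using admissible_curve_siegel_h_pos[OF adm] t by auto
  have l0: "center_pairing X (\<gamma> t) \<noteq> 0" using center_pairing_nonzero[OF X c h] .
  have lt: "0 < (cmod (center_pairing X (\<gamma> t)))^2" using l0 by simp
  show "\<exists>D. ((\<lambda>t. ln (siegel_h (\<gamma> t)) - ln ((cmod (center_pairing X (\<gamma> t)))^2)) has_real_derivative D) (at t)
      \<and> \<bar>D\<bar> \<le> sqrt (siegel_metric (\<gamma> t) V)"
    using DERIV_diff[OF DERIV_chain2[OF DERIV_ln_divide[OF h] has_real_derivative_siegel_h[OF V]]
        DERIV_chain2[OF DERIV_ln_divide[OF lt] has_real_derivative_norm_center_pairing[OF V]]]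
      abs_dlog_ratio_le_sqrt_siegel_metric[OF X h l0, of V]
    by auto
qed

text \<open>\<open>|\<ell>| \<ge> 1\<close> on \<open>\<H>\<^sub>s\<close> and \<open>|\<ell>| \<le> 1\<close> on \<open>X \<H>\<^sub>s\<close> because \<open>|c| s \<ge> 2\<close>.\<close>

lemma admissible_curve_meets_unit_center_pairing:
  fixes X :: "complex^('m::finite idx)^('m idx)"
  assumes X: "X \<in> U_Q" and s: "0 < s" and cs: "2 \<le> cmod (X $ last_idx $ first_idx) * s"
    and adm: "admissible_curve p q \<gamma>"
    and hp: "s \<le> siegel_h p" and hq: "s * (cmod (center_pairing X q))^2 \<le> siegel_h q"
  obtains u where "0 \<le> u" "u \<le> 1" and "cmod (center_pairing X (\<gamma> u)) = 1"
proof -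
  define c where "c = X $ last_idx $ first_idx"
  define N where "N t = cmod (center_pairing X (\<gamma> t))" for t
  have c_pos: "0 < cmod c" using cs unfolding c_def by auto
  have \<gamma>0: "\<gamma> 0 = p" and \<gamma>1: "\<gamma> 1 = q" using adm unfolding admissible_curve_def by auto
  have "cmod c * s \<le> cmod c * siegel_h p" using hp c_pos by simp
  also have "\<dots> \<le> 2 * N 0"
    unfolding c_def N_def \<gamma>0 using siegel_h_le_center_pairing[OF X] hp s by simp
  finally have "1 \<le> N 0" using cs unfolding c_def by simp
  moreover have "N 1 \<le> 1"
  proof -
    have hq0: "0 < siegel_h q" using admissible_curve_siegel_h_pos[OF adm, of 1] \<gamma>1 by simp
    have N1: "0 < N 1"
      unfolding N_def \<gamma>1 using center_pairing_nonzero[OF X _ hq0] c_pos unfolding c_def by auto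
    have "cmod c * (s * (N 1)^2) \<le> cmod c * siegel_h q" using hq c_pos unfolding N_def \<gamma>1 by simp
    also have "\<dots> \<le> 2 * N 1"
      unfolding c_def N_def \<gamma>1 using siegel_h_le_center_pairing[OF X] hq0 by simp
    finally have "((cmod c * s) * N 1) * N 1 \<le> 2 * N 1" by (simp add: power2_eq_square algebra_simps)
    then have "(cmod c * s) * N 1 \<le> 2" using N1 by (simp add: mult_le_cancel_right_pos)
    moreover have "2 * N 1 \<le> (cmod c * s) * N 1" using cs unfolding c_def N_def by (simp add: mult_right_mono)
    ultimately show "N 1 \<le> 1" by linarith
  qed
  moreover have "continuous_on {0..1} N"
    unfolding N_def using admissible_curve_continuous[OF adm]
    by (intro continuous_intros continuous_on_compose2[OF continuous_on_center_pairing]) auto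
  ultimately show ?thesis
    using IVT2'[where f = N and a = 0 and b = 1 and y = 1] that unfolding N_def by auto
qed

lemma curve_length_ge_horoballs:
  fixes X :: "complex^('m::finite idx)^('m idx)"
  assumes X: "X \<in> U_Q" and s: "0 < s" and cs: "2 \<le> cmod (X $ last_idx $ first_idx) * s"
    and adm: "admissible_curve p q \<gamma>"
    and hp: "s \<le> siegel_h p" and hq: "s * (cmod (center_pairing X q))^2 \<le> siegel_h q"
  shows "2 * (ln (cmod (X $ last_idx $ first_idx)) + ln (s / 2)) \<le> curve_length \<gamma>"
proof -
  define c where "c = X $ last_idx $ first_idx"
  define H where "H t = siegel_h (\<gamma> t)" for t
  define N where "N t = (cmod (center_pairing X (\<gamma> t)))^2" for t
  have c: "c \<noteq> 0" and c_pos: "0 < cmod c" using cs unfolding c_def by auto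
  have H: "0 < H t" if "t \<in> {0..1}" for t
    unfolding H_def using admissible_curve_siegel_h_pos[OF adm that] .
  have \<gamma>0: "\<gamma> 0 = p" and \<gamma>1: "\<gamma> 1 = q" using adm unfolding admissible_curve_def by auto
  obtain u where u: "0 \<le> u" "u \<le> 1" and lu: "cmod (center_pairing X (\<gamma> u)) = 1"
    using admissible_curve_meets_unit_center_pairing[OF X s cs adm hp hq] .
  have "cmod c * H u \<le> 2"
    using siegel_h_le_center_pairing[OF X, of "\<gamma> u"] lu H[of u] u unfolding c_def H_def by simp
  then have Hu: "ln (H u) \<le> ln (2 / cmod c)"
    using H[of u] u c_pos by (simp add: field_simps)
  have H0: "ln s \<le> ln (H 0)" using hp s unfolding H_def \<gamma>0 by simp
  have R1: "ln s \<le> ln (H 1) - ln (N 1)"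
  proof -
    have N1: "0 < N 1"
      using center_pairing_nonzero[OF X c[unfolded c_def] H[of 1, unfolded H_def]] unfolding N_def by simp
    then have "s \<le> H 1 / N 1" using hq unfolding H_def N_def \<gamma>1 by (simp add: field_simps)
    then have "ln s \<le> ln (H 1 / N 1)" using s by simp
    then show ?thesis using H[of 1] N1 by (simp add: ln_div)
  qed
  have "\<bar>ln (H u) - ln (H 0)\<bar> \<le> integral {0..u} (curve_speed \<gamma>)"
    unfolding H_def using ln_siegel_h_variation_le[OF adm order_refl u] .
  moreover have "\<bar>(ln (H 1) - ln (N 1)) - (ln (H u) - ln (N u))\<bar> \<le> integral {u..1} (curve_speed \<gamma>)"
    unfolding H_def N_def using ln_ratio_variation_le[OF X c[unfolded c_def] adm u order_refl] .
  moreover have "curve_length \<gamma> = integral {0..u} (curve_speed \<gamma>) + integral {u..1} (curve_speed \<gamma>)"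
    unfolding curve_length_def using adm u
    by (simp add: admissible_curve_def Henstock_Kurzweil_Integration.integral_combine)
  moreover have "2 * (ln (cmod c) + ln (s / 2)) = 2 * (ln s - ln (2 / cmod c))"
    using c_pos s by (simp add: ln_div)
  ultimately show ?thesis using lu H0 Hu R1 unfolding c_def N_def by simp
qed

lemma siegel_h_segment_ge:
  fixes p q :: "complex \<times> (complex^'m::finite)"
  assumes "0 \<le> u" "u \<le> 1"
  shows "(1 - u) * siegel_h p + u * siegel_h q \<le> siegel_h (p + u *\<^sub>R (q - p))"
proof -
  have "snd (p + u *\<^sub>R (q - p)) = (1 - u) *\<^sub>R snd p + u *\<^sub>R snd q" by (simp add: algebra_simps)
  then have "norm (snd (p + u *\<^sub>R (q - p))) \<le> (1 - u) * norm (snd p) + u * norm (snd q)"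
    using assms norm_triangle_ineq[of "(1 - u) *\<^sub>R snd p" "u *\<^sub>R snd q"] by simp
  then have "(norm (snd (p + u *\<^sub>R (q - p))))^2 \<le> ((1 - u) * norm (snd p) + u * norm (snd q))^2"
    by (simp add: power_mono)
  also have "\<dots> \<le> (1 - u) * (norm (snd p))^2 + u * (norm (snd q))^2"
  proof -
    have "0 \<le> u * (1 - u) * (norm (snd p) - norm (snd q))^2" using assms by simp
    then show ?thesis by (simp add: power2_eq_square algebra_simps)
  qed
  finally show ?thesis unfolding siegel_h_def by (simp add: algebra_simps)
qed

lemma admissible_curve_segment:
  fixes p q :: "complex \<times> (complex^'m::finite)"
  assumes p: "0 < siegel_h p" and q: "0 < siegel_h q"
  shows "admissible_curve p q (\<lambda>u. p + u *\<^sub>R (q - p))"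
  unfolding admissible_curve_def
proof (intro conjI)
  let ?\<gamma> = "\<lambda>u::real. p + u *\<^sub>R (q - p)"
  have \<gamma>': "(?\<gamma> has_vector_derivative (q - p)) (at u)" for u
    by (auto intro!: derivative_eq_intros)
  have h: "0 < siegel_h (?\<gamma> u)" if "u \<in> {0..1}" for u
  proof -
    have "0 < (1 - u) * siegel_h p + u * siegel_h q"
      using that p q by (cases "u = 1") (auto intro: add_pos_nonneg)
    also have "\<dots> \<le> siegel_h (?\<gamma> u)" using that by (intro siegel_h_segment_ge) auto
    finally show ?thesis .
  qed
  show "?\<gamma> piecewise_C1_differentiable_on {0..1}"
    by (rule C1_differentiable_imp_piecewise)
      (auto simp: C1_differentiable_on_def intro!: exI[of _ "\<lambda>_. q - p"] \<gamma>')
  show "?\<gamma> ` {0..1} \<subseteq> siegel_domain" using h unfolding siegel_domain_def by auto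
  have "continuous_on {0..1} (\<lambda>u. sqrt (siegel_metric (?\<gamma> u) (q - p)))"
    unfolding siegel_metric_def using h
    by (intro continuous_intros continuous_on_compose2[OF continuous_on_siegel_h]
        continuous_on_compose2[OF bounded_linear.continuous_on[OF bounded_linear_vec_nth continuous_on_id]])
      (auto, fastforce)
  then show "curve_speed ?\<gamma> integrable_on {0..1}"
    unfolding curve_speed_def vector_derivative_at[OF \<gamma>'] by (rule integrable_continuous_interval)
qed auto

lemma siegel_dist_ge:
  assumes "0 < siegel_h p" and "0 < siegel_h q"
    and "\<And>\<gamma>. admissible_curve p q \<gamma> \<Longrightarrow> B \<le> curve_length \<gamma>"
  shows "B \<le> siegel_dist p q"
  unfolding siegel_dist_def
  by (rule cInf_greatest) (use admissible_curve_segment[OF assms(1,2)] assms(3) in auto)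

lemma curve_length_nonneg: "admissible_curve p q \<gamma> \<Longrightarrow> 0 \<le> curve_length \<gamma>"
  unfolding curve_length_def
  by (rule integral_nonneg) (auto simp: admissible_curve_def curve_speed_nonneg)

lemma siegel_dist_le:
  assumes "admissible_curve p q \<gamma>"
  shows "siegel_dist p q \<le> curve_length \<gamma>"
  unfolding siegel_dist_def
proof (rule cInf_lower)
  show "bdd_below {curve_length \<gamma> |\<gamma>. admissible_curve p q \<gamma>}"
    by (rule bdd_belowI[of _ 0]) (auto intro: curve_length_nonneg)
qed (use assms in auto)

text \<open>Vertical lines, along which only \<open>Re w\<^sub>0\<close> varies, are geodesics parametrised by
  \<open>ln h\<close>.\<close>

lemma siegel_dist_vertical_le:
  fixes p q :: "complex \<times> (complex^'m::finite)"
  assumes p: "0 < siegel_h p" and q: "0 < siegel_h q"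
    and vertical: "snd q = snd p" "Im (fst q) = Im (fst p)"
  shows "siegel_dist p q \<le> \<bar>ln (siegel_h q / siegel_h p)\<bar>"
proof -
  define a where "a = siegel_h p"
  define L where "L = ln (siegel_h q / a)"
  define \<gamma> where "\<gamma> u = (fst p + of_real (a / 2 * (exp (u * L) - 1)), snd p)" for u :: real
  define V where "V u = (complex_of_real (a / 2 * (exp (u * L) * L)), 0 :: complex^'m)" for u :: real
  have a: "0 < a" using p a_def by simp
  have \<gamma>': "(\<gamma> has_vector_derivative V u) (at u)" for u
    unfolding \<gamma>_def V_def
    by (auto intro!: derivative_eq_intros has_vector_derivative_Pair
        simp: has_real_derivative_iff_has_vector_derivative[symmetric])
  have h\<gamma>: "siegel_h (\<gamma> u) = a * exp (u * L)" for u
    unfolding \<gamma>_def using a_def by (simp add: siegel_h_def algebra_simps)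
  have speed: "curve_speed \<gamma> u = \<bar>L\<bar>" for u
  proof -
    have "siegel_metric (\<gamma> u) (V u) = L^2"
      unfolding siegel_metric_def h\<gamma> using a
      by (simp add: V_def norm_mult power_mult_distrib field_simps power2_eq_square)
    then show ?thesis unfolding curve_speed_def vector_derivative_at[OF \<gamma>'] by simp
  qed
  then have speed_const: "curve_speed \<gamma> = (\<lambda>_. \<bar>L\<bar>)" by auto
  have "\<gamma> 1 = q"
  proof -
    have "exp L = siegel_h q / a" unfolding L_def using a q by simp
    moreover have "Re (fst q) = Re (fst p) + (siegel_h q - a) / 2"
      unfolding a_def siegel_h_def using vertical by (simp add: field_simps)
    ultimately show ?thesis
      unfolding \<gamma>_def using a vertical by (simp add: prod_eq_iff complex_eq_iff field_simps)
  qed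
  moreover have "\<gamma> 0 = p" unfolding \<gamma>_def by simp
  ultimately have "admissible_curve p q \<gamma>"
    unfolding admissible_curve_def siegel_domain_def
  proof (intro conjI)
    show "\<gamma> piecewise_C1_differentiable_on {0..1}"
      by (rule C1_differentiable_imp_piecewise)
        (auto simp: C1_differentiable_on_def V_def intro!: exI[of _ V] \<gamma>' continuous_intros)
    show "curve_speed \<gamma> integrable_on {0..1}" unfolding speed_const by (rule integrable_const_ivl)
  qed (auto simp: h\<gamma> a)
  then show ?thesis
    using siegel_dist_le[of p q \<gamma>] unfolding curve_length_def speed_const L_def a_def by simp
qed

section \<open>Distance between the horoballs\<close>

lemma interior_horoballs_meet:
  fixes X :: "complex^('m::finite idx)^('m idx)"
  assumes X: "X \<in> U_Q" and s: "0 < s"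
    and m: "s < siegel_h m" "s * (cmod (center_pairing X m))^2 < siegel_h m"
  shows "interior (horoball s) \<inter> interior (proj_act X ` horoball s) \<noteq> {}"
proof -
  define O1 where "O1 = {m :: complex \<times> (complex^'m). s < siegel_h m}"
  define O2 where "O2 = {m :: complex \<times> (complex^'m). s * (cmod (center_pairing X m))^2 < siegel_h m}"
  have "open O1" unfolding O1_def
    by (intro open_Collect_less continuous_intros continuous_on_siegel_h)
  moreover have "O1 \<subseteq> horoball s" unfolding O1_def horoball_def by auto
  ultimately have O1: "O1 \<subseteq> interior (horoball s)" by (rule interior_maximal[rotated])
  have "open O2" unfolding O2_def
    by (intro open_Collect_less continuous_intros continuous_on_siegel_h continuous_on_center_pairing)
  moreover have "O2 \<subseteq> proj_act X ` horoball s"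
    unfolding O2_def proj_act_horoball[OF X s]
  proof
    fix x assume "x \<in> {x. s * (cmod (center_pairing X x))^2 < siegel_h x}"
    then have "s * (cmod (center_pairing X x))^2 < siegel_h x" by simp
    moreover have "0 \<le> s * (cmod (center_pairing X x))^2" using s by simp
    ultimately show "x \<in> {x. 0 < siegel_h x \<and> s * (cmod (center_pairing X x))^2 \<le> siegel_h x}"
      by simp
  qed
  ultimately have "O2 \<subseteq> interior (proj_act X ` horoball s)" by (rule interior_maximal[rotated])
  with O1 show ?thesis using m unfolding O1_def O2_def by blast
qed

lemma two_le_cmod_mult_if_interiors_disjoint:
  fixes X :: "complex^('m::finite idx)^('m idx)"
  assumes X: "X \<in> U_Q" and s: "0 < s"
    and disj: "interior (horoball s) \<inter> interior (proj_act X ` horoball s) = {}"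
  shows "2 \<le> cmod (X $ last_idx $ first_idx) * s"
proof (rule ccontr)
  assume small: "\<not> 2 \<le> cmod (X $ last_idx $ first_idx) * s"
  have "\<exists>m :: complex \<times> (complex^'m). s < siegel_h m \<and> s * (cmod (center_pairing X m))^2 < siegel_h m"
  proof (cases "X $ last_idx $ first_idx = 0")
    case True
    define t where "t = s * (cmod (X $ first_idx $ first_idx))^2 + s"
    have "siegel_h (complex_of_real t, 0 :: complex^'m) = 2 * t"
      and "center_pairing X (complex_of_real t, 0 :: complex^'m) = cnj (X $ first_idx $ first_idx)"
      using True by (simp_all add: siegel_h_def center_pairing_eq)
    moreover have "s < 2 * t" using s unfolding t_def by (simp add: add_pos_nonneg)
    moreover have "s * (cmod (X $ first_idx $ first_idx))^2 < 2 * t"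
      using s unfolding t_def by (simp add: add_nonneg_pos)
    ultimately show ?thesis by (intro exI[of _ "(complex_of_real t, 0)"]) simp
  next
    case False
    define c where "c = X $ last_idx $ first_idx"
    define m :: "complex \<times> (complex^'m)"
      where "m = (X $ first_idx $ first_idx / c + of_real (1 / cmod c), \<chi> i. X $ mid_idx i $ first_idx / c)"
    have "siegel_h m = 2 / cmod c" and "cmod (center_pairing X m) = 1"
      using vertical_line_center[OF X False, where t = "1 / cmod c"] False
      unfolding m_def c_def by (simp_all add: norm_mult norm_divide)
    moreover have "s < 2 / cmod c" using small False unfolding c_def by (simp add: field_simps)
    ultimately show ?thesis by (intro exI[of _ m]) simp
  qed
  with interior_horoballs_meet[OF X s] disj show False by blast
qed

lemma siegel_dist_horoballs_ge:
  fixes X :: "complex^('m::finite idx)^('m idx)"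
  assumes X: "X \<in> U_Q" and s: "0 < s" and cs: "2 \<le> cmod (X $ last_idx $ first_idx) * s"
    and p: "p \<in> horoball s" and q: "q \<in> proj_act X ` horoball s"
  shows "2 * (ln (cmod (X $ last_idx $ first_idx)) + ln (s / 2)) \<le> siegel_dist p q"
proof -
  have hp: "s \<le> siegel_h p" using p unfolding horoball_def by simp
  have hq: "0 < siegel_h q" "s * (cmod (center_pairing X q))^2 \<le> siegel_h q"
    using q unfolding proj_act_horoball[OF X s] by auto
  show ?thesis
    using hp s by (intro siegel_dist_ge hq curve_length_ge_horoballs[OF X s cs _ hp hq(2)]) auto
qed

lemma siegel_dist_horoballs_attained:
  fixes X :: "complex^('m::finite idx)^('m idx)"
  assumes X: "X \<in> U_Q" and s: "0 < s" and cs: "2 \<le> cmod (X $ last_idx $ first_idx) * s"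
  obtains p q where "p \<in> horoball s" and "q \<in> proj_act X ` horoball s"
    and "siegel_dist p q \<le> 2 * (ln (cmod (X $ last_idx $ first_idx)) + ln (s / 2))"
proof -
  define c where "c = X $ last_idx $ first_idx"
  have c: "c \<noteq> 0" and c_pos: "0 < cmod c" using cs unfolding c_def by auto
  define z where "z = X $ first_idx $ first_idx / X $ last_idx $ first_idx"
  define \<zeta> :: "complex^'m" where "\<zeta> = (\<chi> i. X $ mid_idx i $ first_idx / X $ last_idx $ first_idx)"
  note vertical = vertical_line_center[OF X c[unfolded c_def], folded z_def \<zeta>_def, folded c_def]
  define t where "t = 2 / ((cmod c)^2 * s)"
  define p where "p = (z + of_real (s / 2), \<zeta>)"
  define q where "q = (z + of_real t, \<zeta>)"
  have t: "0 < t" unfolding t_def using s c_pos by simp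
  have hp: "siegel_h p = s" and hq: "siegel_h q = 2 * t"
    unfolding p_def q_def using vertical(1)[of "s / 2"] vertical(1)[of t] by simp_all
  have p: "p \<in> horoball s" using hp unfolding horoball_def by simp
  have lq: "cmod (center_pairing X q) = t * cmod c"
    unfolding q_def vertical(2) using t by (simp add: norm_mult)
  have "s * (t * cmod c)^2 = 2 * t"
    using s c_pos by (simp add: t_def field_simps power2_eq_square)
  then have q: "q \<in> proj_act X ` horoball s"
    unfolding proj_act_horoball[OF X s] using hq t lq by simp
  have "siegel_dist p q \<le> 2 * (ln (cmod c) + ln (s / 2))"
  proof -
    have "siegel_dist p q \<le> \<bar>ln (siegel_h q / siegel_h p)\<bar>"
      by (rule siegel_dist_vertical_le) (use hp hq s t in \<open>simp_all add: p_def q_def\<close>)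
    also have "siegel_h q / siegel_h p = inverse ((cmod c * s / 2)^2)"
      unfolding hp hq t_def using s c_pos by (simp add: field_simps power2_eq_square)
    also have "\<bar>ln \<dots>\<bar> = 2 * ln (cmod c * s / 2)"
    proof -
      have "1 \<le> cmod c * s / 2" using cs unfolding c_def by simp
      then show ?thesis by (simp add: ln_inverse ln_realpow)
    qed
    also have "\<dots> = 2 * (ln (cmod c) + ln (s / 2))" using ln_mult[of "cmod c" "s / 2"] s c_pos by simp
    finally show ?thesis .
  qed
  with p q show ?thesis using that unfolding c_def by blast
qed

theorem lemma6p3:
  fixes X :: "complex^('m::finite idx)^('m idx)" and s :: real
  assumes "X \<in> U_Q" and "s > 0"
    and "interior (horoball s) \<inter> interior (proj_act X ` horoball s) = {}"
  shows "siegel_setdist' (horoball s) (proj_act X ` horoball s)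
           = ln (cmod (X $ last_idx $ first_idx)) + ln (s / 2)"
proof -
  let ?d = "ln (cmod (X $ last_idx $ first_idx)) + ln (s / 2)"
  let ?D = "{siegel_dist' p q | p q. p \<in> horoball s \<and> q \<in> proj_act X ` horoball s}"
  have cs: "2 \<le> cmod (X $ last_idx $ first_idx) * s"
    using two_le_cmod_mult_if_interiors_disjoint[OF assms] .
  have lower: "?d \<le> d" if "d \<in> ?D" for d
  proof -
    obtain p q where "d = siegel_dist' p q" "p \<in> horoball s" "q \<in> proj_act X ` horoball s"
      using \<open>d \<in> ?D\<close> by blast
    with siegel_dist_horoballs_ge[OF assms(1,2) cs, of p q] show ?thesis
      unfolding siegel_dist'_def by simp
  qed
  obtain p q where pq: "p \<in> horoball s" "q \<in> proj_act X ` horoball s" "siegel_dist p q \<le> 2 * ?d"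
    using siegel_dist_horoballs_attained[OF assms(1,2) cs] .
  have attained: "siegel_dist' p q \<in> ?D" using pq(1,2) by blast
  have "Inf ?D \<le> ?d"
    using cInf_lower[OF attained bdd_belowI[OF lower]] pq(3) unfolding siegel_dist'_def by simp
  moreover have "?D \<noteq> {}" using attained by blast
  then have "?d \<le> Inf ?D" using lower by (rule cInf_greatest)
  ultimately show ?thesis unfolding siegel_setdist'_def by (rule antisym)
qed

end
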